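(* Let $X$ be a $0$-dimensional space. Then the group $CHom(C_p(X,\mathbb Z),\mathbb Z)$ of continuous homomorphisms $C_p(X,\mathbb Z)\to\mathbb Z$ is isomorphic to the free abelian group $A(X)$: every continuous homomorphism $\phi:C_p(X,\mathbb Z)\to\mathbb Z$ has the form $\phi(f)=\sum_{x\in F}n_xf(x)$ for a finite set $F\subseteq X$ and integers $n_x$, and the map sending $\phi$ to $\sum_{x\in F}n_x x\in A(X)$ is a group isomorphism.
   Context: Spaces are Tikhonov; $0$-dimensional means having a base of clopen sets. $C_p(X,\mathbb Z)$ is the group of continuous functions $X\to\mathbb Z$ ($\mathbb Z$ discrete) with the topology of pointwise convergence; $\mathbb Z$ is discrete. $A(X)$ is the free abelian group on the set $X$. *)

theory Defs
  imports "HOL-Analysis.Analysis" "HOL-Algebra.Free_Abelian_Groups" "HOL-Algebra.Elementary_Groups"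
begin

definition zero_dimensional :: "'a topology \<Rightarrow> bool" where
  "zero_dimensional X \<longleftrightarrow>
     (\<forall>U x. openin X U \<and> x \<in> U \<longrightarrow>
        (\<exists>V. openin X V \<and> closedin X V \<and> x \<in> V \<and> V \<subseteq> U))"

definition tikhonov_space :: "'a topology \<Rightarrow> bool" where
  "tikhonov_space X \<longleftrightarrow> completely_regular_space X \<and> t1_space X"

definition Cp :: "'a topology \<Rightarrow> ('a \<Rightarrow> int) set" where
  "Cp X = {f \<in> extensional (topspace X).
             continuous_map X (discrete_topology (UNIV::int set)) f}"

definition Cp_top :: "'a topology \<Rightarrow> ('a \<Rightarrow> int) topology" where
  "Cp_top X = subtopology (product_topology (\<lambda>_. discrete_topology (UNIV::int set)) (topspace X)) (Cp X)"

definition Cp_group :: "'a topology \<Rightarrow> ('a \<Rightarrow> int) monoid" where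
  "Cp_group X = \<lparr>carrier = Cp X,
                  monoid.mult = (\<lambda>f g. restrict (\<lambda>x. f x + g x) (topspace X)),
                  one = restrict (\<lambda>_. 0) (topspace X)\<rparr>"

definition CHom_set :: "'a topology \<Rightarrow> (('a \<Rightarrow> int) \<Rightarrow> int) set" where
  "CHom_set X = {\<phi> \<in> extensional (Cp X).
      \<phi> \<in> hom (Cp_group X) integer_group \<and>
      continuous_map (Cp_top X) (discrete_topology (UNIV::int set)) \<phi>}"

definition CHom :: "'a topology \<Rightarrow> (('a \<Rightarrow> int) \<Rightarrow> int) monoid" where
  "CHom X = \<lparr>carrier = CHom_set X,
             monoid.mult = (\<lambda>\<phi> \<psi>. restrict (\<lambda>f. \<phi> f + \<psi> f) (Cp X)),
             one = restrict (\<lambda>_. 0) (Cp X)\<rparr>"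

end

theory Submission
  imports Defs
begin

(* A continuous homomorphism \<phi> : C_p(X,Z) \<rightarrow> Z is continuous at 0, so it vanishes on a basic
   neighbourhood {g. g = 0 on F} of 0 for some finite F \<subseteq> X; by additivity \<phi> f then depends only
   on the restriction of f to F.  Since X is T1 and zero-dimensional, clopen sets separate each
   point of F from the others, giving e_x \<in> C_p(X,Z) with e_x(y) = [x = y] on F.  As f agrees
   with \<Sum>_{x\<in>F} f(x) e_x on F, this yields \<phi> f = \<Sum>_{x\<in>F} \<phi>(e_x) f(x).  Hence the pairing
   A(X) \<rightarrow> CHom, c \<mapsto> (f \<mapsto> \<Sum> c_x f(x)), which is additive and continuous, is surjective; the
   same functions e_x recover the coefficients c_x from the pairing, so it is also injective. *)

lemma continuous_map_discrete_comp:
  "continuous_map X (discrete_topology UNIV) f \<Longrightarrow>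
   continuous_map X (discrete_topology UNIV) (\<lambda>x. h (f x))"
  using continuous_map_compose[of X "discrete_topology UNIV" f "discrete_topology UNIV" h]
  by (simp add: o_def)

lemma continuous_map_discrete_binop:
  assumes "continuous_map X (discrete_topology UNIV) f"
    and "continuous_map X (discrete_topology UNIV) g"
  shows "continuous_map X (discrete_topology UNIV) (\<lambda>x. h (f x) (g x))"
proof -
  have "continuous_map X (discrete_topology UNIV) (\<lambda>x. (f x, g x))"
    using continuous_map_pairedI[OF assms] by (simp flip: prod_topology_discrete_topology)
  from continuous_map_discrete_comp[OF this, where h = "case_prod h"] show ?thesis
    by simp
qed

lemma continuous_map_discrete_sum:
  fixes e :: "'i \<Rightarrow> 'a \<Rightarrow> 'b::comm_monoid_add"
  assumes "finite I" "\<And>i. i \<in> I \<Longrightarrow> continuous_map X (discrete_topology UNIV) (e i)"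
  shows "continuous_map X (discrete_topology UNIV) (\<lambda>x. \<Sum>i\<in>I. e i x)"
  using assms
proof (induction I rule: finite_induct)
  case empty
  then show ?case by simp
next
  case (insert i I)
  then show ?case
    by (simp add: continuous_map_discrete_binop[where h = "(+)"])
qed

lemma continuous_map_discrete_clopen_cases:
  assumes "openin X V" "closedin X V"
  shows "continuous_map X (discrete_topology UNIV) (\<lambda>x. if x \<in> V then a else b)"
  unfolding continuous_map_def
proof (intro conjI allI impI)
  fix U
  have "{x \<in> topspace X. (if x \<in> V then a else b) \<in> U} =
        (if a \<in> U then V else {}) \<union> (if b \<in> U then topspace X - V else {})"
    using openin_subset[OF assms(1)] by auto
  then show "openin X {x \<in> topspace X. (if x \<in> V then a else b) \<in> U}"
    using assms by (simp add: openin_diff openin_Un)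
qed simp

lemma continuous_map_product_discrete_finite_dependence:
  assumes cont: "continuous_map (subtopology (product_topology (\<lambda>_. discrete_topology UNIV) I) S)
                   (discrete_topology UNIV) \<phi>"
    and S: "S \<subseteq> extensional I" and z: "z \<in> S"
  obtains F where "finite F" "F \<subseteq> I" "\<And>g. g \<in> S \<Longrightarrow> (\<forall>i\<in>F. g i = z i) \<Longrightarrow> \<phi> g = \<phi> z"
proof -
  let ?P = "product_topology (\<lambda>_. discrete_topology (UNIV :: 'b set)) I"
  have top: "topspace (subtopology ?P S) = S"
    using S by (auto simp: PiE_def)
  have "openin (subtopology ?P S) {g \<in> topspace (subtopology ?P S). \<phi> g \<in> {\<phi> z}}"
    using cont by (rule openin_continuous_map_preimage) simp
  then obtain T where T: "openin ?P T" and fibre: "{g \<in> S. \<phi> g = \<phi> z} = T \<inter> S"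
    unfolding top openin_subtopology by auto
  have "z \<in> T"
    using fibre z by blast
  then obtain W where W: "finite {i \<in> I. W i \<noteq> UNIV}" "z \<in> Pi\<^sub>E I W" "Pi\<^sub>E I W \<subseteq> T"
    using T unfolding openin_product_topology_alt by auto
  show thesis
  proof (rule that[OF W(1)])
    fix g assume g: "g \<in> S" "\<forall>i\<in>{i \<in> I. W i \<noteq> UNIV}. g i = z i"
    have "g \<in> Pi\<^sub>E I W"
      using g W(2) S by (force simp: PiE_iff)
    then show "\<phi> g = \<phi> z"
      using fibre W(3) g(1) by blast
  qed auto
qed

lemma zero_dimensional_t1_separating_clopen:
  assumes "t1_space X" "zero_dimensional X" "finite F" "F \<subseteq> topspace X" "x \<in> F"
  obtains V where "openin X V" "closedin X V" "V \<inter> F = {x}"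
proof -
  have "closedin X (F - {x})"
    using assms(1,3,4) unfolding t1_space_closedin_finite by blast
  then have "openin X (topspace X - (F - {x}))"
    by (simp add: openin_diff)
  then obtain V where "openin X V" "closedin X V" "x \<in> V" "V \<subseteq> topspace X - (F - {x})"
    using assms(2,4,5) unfolding zero_dimensional_def by blast
  then show thesis
    using that assms(5) by blast
qed

lemma Cp_restrictI:
  "continuous_map X (discrete_topology UNIV) h \<Longrightarrow> restrict h (topspace X) \<in> Cp X"
  unfolding Cp_def by (auto elim: continuous_map_eq)

lemma Cp_binop:
  assumes "f \<in> Cp X" "g \<in> Cp X"
  shows "restrict (\<lambda>x. h (f x) (g x)) (topspace X) \<in> Cp X"
  using continuous_map_discrete_binop[of X f g h] assms by (simp add: Cp_def Cp_restrictI)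

lemma Cp_scale:
  assumes "f \<in> Cp X"
  shows "restrict (\<lambda>x. k * f x) (topspace X) \<in> Cp X"
  using continuous_map_discrete_comp[of X f "(*) k"] assms by (simp add: Cp_def Cp_restrictI)

lemma Cp_lincomb:
  assumes "finite I" "\<And>i. i \<in> I \<Longrightarrow> e i \<in> Cp X"
  shows "restrict (\<lambda>x. \<Sum>i\<in>I. a i * e i x) (topspace X) \<in> Cp X"
proof (rule Cp_restrictI, rule continuous_map_discrete_sum[OF assms(1)])
  fix i assume "i \<in> I"
  then show "continuous_map X (discrete_topology UNIV) (\<lambda>x. a i * e i x)"
    using continuous_map_discrete_comp[of X "e i" "(*) (a i)"] assms(2) by (simp add: Cp_def)
qed

lemma Cp_separating_function:
  assumes "t1_space X" "zero_dimensional X" "finite F" "F \<subseteq> topspace X" "x \<in> F"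
  obtains e where "e \<in> Cp X" "\<And>y. y \<in> F \<Longrightarrow> e y = of_bool (y = x)"
proof -
  obtain V where V: "openin X V" "closedin X V" "V \<inter> F = {x}"
    using zero_dimensional_t1_separating_clopen[OF assms] .
  let ?e = "restrict (\<lambda>y. if y \<in> V then 1 else 0) (topspace X)"
  have "?e \<in> Cp X"
    by (intro Cp_restrictI continuous_map_discrete_clopen_cases V(1,2))
  moreover have "?e y = of_bool (y = x)" if "y \<in> F" for y
    using \<open>y \<in> F\<close> V(3) assms(4) by auto
  ultimately show thesis
    using that by blast
qed

lemma Cp_hom_add:
  assumes "\<phi> \<in> hom (Cp_group X) integer_group" "f \<in> Cp X" "g \<in> Cp X"
  shows "\<phi> (restrict (\<lambda>x. f x + g x) (topspace X)) = \<phi> f + \<phi> g"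
  using hom_mult[OF assms(1), of f g] assms(2,3) by (simp add: Cp_group_def integer_group_def)

lemma Cp_hom_zero:
  assumes "\<phi> \<in> hom (Cp_group X) integer_group"
  shows "\<phi> (restrict (\<lambda>_. 0) (topspace X)) = 0"
proof -
  let ?z = "restrict (\<lambda>_. 0 :: int) (topspace X)"
  have "?z \<in> Cp X"
    by (simp add: Cp_restrictI)
  moreover have "restrict (\<lambda>x. ?z x + ?z x) (topspace X) = ?z"
    by auto
  ultimately show ?thesis
    using Cp_hom_add[OF assms, of ?z ?z] by simp
qed

lemma Cp_hom_diff:
  assumes "\<phi> \<in> hom (Cp_group X) integer_group" "f \<in> Cp X" "g \<in> Cp X"
  shows "\<phi> (restrict (\<lambda>x. f x - g x) (topspace X)) = \<phi> f - \<phi> g"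
proof -
  let ?d = "restrict (\<lambda>x. f x - g x) (topspace X)"
  have "?d \<in> Cp X"
    using assms(2,3) by (rule Cp_binop[where h = "(-)"])
  moreover have "restrict (\<lambda>x. ?d x + g x) (topspace X) = f"
    using assms(2) by (auto simp: Cp_def extensional_def)
  ultimately show ?thesis
    using Cp_hom_add[OF assms(1), of ?d g] assms(3) by simp
qed

lemma Cp_hom_scale:
  assumes "\<phi> \<in> hom (Cp_group X) integer_group" "f \<in> Cp X"
  shows "\<phi> (restrict (\<lambda>x. k * f x) (topspace X)) = k * \<phi> f"
proof -
  let ?s = "\<lambda>k. restrict (\<lambda>x. k * f x) (topspace X)"
  have s_Cp: "?s k \<in> Cp X" for k
    using assms(2) by (rule Cp_scale)
  have s_succ: "?s (k + 1) = restrict (\<lambda>x. ?s k x + f x) (topspace X)" for k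
    by (auto simp: algebra_simps)
  have succ: "\<phi> (?s (k + 1)) = \<phi> (?s k) + \<phi> f" for k
    using Cp_hom_add[OF assms(1) s_Cp assms(2)] by (simp only: s_succ)
  show ?thesis
  proof (rule int_induct[where k = 0 and i = k])
    show "\<phi> (?s 0) = 0 * \<phi> f"
      using Cp_hom_zero[OF assms(1)] by (simp only: mult_zero_left)
  next
    fix i assume "\<phi> (?s i) = i * \<phi> f"
    then show "\<phi> (?s (i + 1)) = (i + 1) * \<phi> f"
      using succ[of i] by (simp add: algebra_simps)
  next
    fix i assume "\<phi> (?s i) = i * \<phi> f"
    then show "\<phi> (?s (i - 1)) = (i - 1) * \<phi> f"
      using succ[of "i - 1"] by (simp add: algebra_simps)
  qed
qed

lemma Cp_hom_sum:
  assumes hom: "\<phi> \<in> hom (Cp_group X) integer_group"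
    and "finite I" "\<And>i. i \<in> I \<Longrightarrow> e i \<in> Cp X"
  shows "\<phi> (restrict (\<lambda>x. \<Sum>i\<in>I. a i * e i x) (topspace X)) = (\<Sum>i\<in>I. a i * \<phi> (e i))"
  using assms(2,3)
proof (induction I rule: finite_induct)
  case empty
  show ?case
    using Cp_hom_zero[OF hom] by (simp only: sum.empty)
next
  case (insert j I)
  let ?s = "restrict (\<lambda>x. a j * e j x) (topspace X)"
  let ?t = "restrict (\<lambda>x. \<Sum>i\<in>I. a i * e i x) (topspace X)"
  have s: "?s \<in> Cp X" and t: "?t \<in> Cp X"
    using insert by (simp_all add: Cp_scale Cp_lincomb)
  have ej_Cp: "e j \<in> Cp X"
    using insert.prems by simp
  have IH: "\<phi> ?t = (\<Sum>i\<in>I. a i * \<phi> (e i))"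
    using insert.prems by (intro insert.IH) simp
  have split: "restrict (\<lambda>x. \<Sum>i\<in>insert j I. a i * e i x) (topspace X) =
               restrict (\<lambda>x. ?s x + ?t x) (topspace X)"
    using insert.hyps by auto
  have "\<phi> (restrict (\<lambda>x. \<Sum>i\<in>insert j I. a i * e i x) (topspace X)) = \<phi> ?s + \<phi> ?t"
    unfolding split by (rule Cp_hom_add[OF hom s t])
  also have "\<dots> = a j * \<phi> (e j) + (\<Sum>i\<in>I. a i * \<phi> (e i))"
    using Cp_hom_scale[OF hom ej_Cp] IH by simp
  also have "\<dots> = (\<Sum>i\<in>insert j I. a i * \<phi> (e i))"
    using insert.hyps by simp
  finally show ?case .
qed

lemma CHom_finite_dependence:
  assumes "\<phi> \<in> CHom_set X"
  obtains F where "finite F" "F \<subseteq> topspace X"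
    "\<And>f g. f \<in> Cp X \<Longrightarrow> g \<in> Cp X \<Longrightarrow> (\<forall>x\<in>F. f x = g x) \<Longrightarrow> \<phi> f = \<phi> g"
proof -
  have hom: "\<phi> \<in> hom (Cp_group X) integer_group"
    and cont: "continuous_map (Cp_top X) (discrete_topology UNIV) \<phi>"
    using assms by (auto simp: CHom_set_def)
  let ?z = "restrict (\<lambda>_. 0 :: int) (topspace X)"
  have "continuous_map (subtopology (product_topology (\<lambda>_. discrete_topology UNIV) (topspace X)) (Cp X))
          (discrete_topology UNIV) \<phi>"
    using cont by (simp add: Cp_top_def)
  moreover have "Cp X \<subseteq> extensional (topspace X)"
    by (auto simp: Cp_def)
  moreover have "?z \<in> Cp X"
    by (simp add: Cp_restrictI)
  ultimately obtain F where F: "finite F" "F \<subseteq> topspace X"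
    and vanish: "\<And>g. g \<in> Cp X \<Longrightarrow> (\<forall>x\<in>F. g x = ?z x) \<Longrightarrow> \<phi> g = \<phi> ?z"
    by (rule continuous_map_product_discrete_finite_dependence) blast
  show thesis
  proof (rule that[OF F])
    fix f g assume fg: "f \<in> Cp X" "g \<in> Cp X" "\<forall>x\<in>F. f x = g x"
    let ?d = "restrict (\<lambda>x. f x - g x) (topspace X)"
    have "?d \<in> Cp X"
      using fg(1,2) by (rule Cp_binop[where h = "(-)"])
    moreover have "\<forall>x\<in>F. ?d x = ?z x"
      using fg(3) F(2) by auto
    ultimately have "\<phi> ?d = 0"
      using vanish Cp_hom_zero[OF hom] by simp
    then show "\<phi> f = \<phi> g"
      using Cp_hom_diff[OF hom fg(1,2)] by simp
  qed
qed

lemma CHom_eq_finite_sum: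
  assumes "t1_space X" "zero_dimensional X" "\<phi> \<in> CHom_set X"
  obtains F n where "finite F" "F \<subseteq> topspace X" "\<And>f. f \<in> Cp X \<Longrightarrow> \<phi> f = (\<Sum>x\<in>F. n x * f x)"
proof -
  have hom: "\<phi> \<in> hom (Cp_group X) integer_group"
    using assms(3) by (simp add: CHom_set_def)
  obtain F where F: "finite F" "F \<subseteq> topspace X"
    and dep: "\<And>f g. f \<in> Cp X \<Longrightarrow> g \<in> Cp X \<Longrightarrow> (\<forall>x\<in>F. f x = g x) \<Longrightarrow> \<phi> f = \<phi> g"
    using CHom_finite_dependence[OF assms(3)] by blast
  have separating: "\<forall>x\<in>F. \<exists>e. e \<in> Cp X \<and> (\<forall>y\<in>F. e y = of_bool (y = x))"
  proof
    fix x assume "x \<in> F"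
    then obtain e where "e \<in> Cp X" "\<And>y. y \<in> F \<Longrightarrow> e y = of_bool (y = x)"
      using Cp_separating_function[OF assms(1,2) F] by blast
    then show "\<exists>e. e \<in> Cp X \<and> (\<forall>y\<in>F. e y = of_bool (y = x))"
      by blast
  qed
  from bchoice[OF separating]
  obtain e where e: "\<forall>x\<in>F. e x \<in> Cp X \<and> (\<forall>y\<in>F. e x y = of_bool (y = x))" ..
  show thesis
  proof (rule that[OF F])
    fix f assume f: "f \<in> Cp X"
    let ?h = "restrict (\<lambda>y. \<Sum>x\<in>F. f x * e x y) (topspace X)"
    have "?h \<in> Cp X"
      using F(1) e by (simp add: Cp_lincomb)
    moreover have "f y = ?h y" if "y \<in> F" for y
      using that F(1) e subsetD[OF F(2) that] by simp
    ultimately have "\<phi> f = \<phi> ?h"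
      using dep f by blast
    also have "\<dots> = (\<Sum>x\<in>F. \<phi> (e x) * f x)"
      using Cp_hom_sum[OF hom F(1), of e f] e by (simp add: mult.commute)
    finally show "\<phi> f = (\<Sum>x\<in>F. \<phi> (e x) * f x)" .
  qed
qed

definition Cp_pairing :: "'a topology \<Rightarrow> ('a \<Rightarrow>\<^sub>0 int) \<Rightarrow> ('a \<Rightarrow> int) \<Rightarrow> int" where
  "Cp_pairing X c = restrict (\<lambda>f. \<Sum>x\<in>Poly_Mapping.keys c. poly_mapping.lookup c x * f x) (Cp X)"

lemma Cp_pairing_apply:
  "f \<in> Cp X \<Longrightarrow> Cp_pairing X c f = (\<Sum>x\<in>Poly_Mapping.keys c. poly_mapping.lookup c x * f x)"
  by (simp add: Cp_pairing_def)

lemma sum_keys_superset: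
  fixes c :: "'a \<Rightarrow>\<^sub>0 'b::semiring_0"
  assumes "finite K" "Poly_Mapping.keys c \<subseteq> K"
  shows "(\<Sum>x\<in>Poly_Mapping.keys c. poly_mapping.lookup c x * f x) = (\<Sum>x\<in>K. poly_mapping.lookup c x * f x)"
  by (rule sum.mono_neutral_left) (use assms in \<open>auto simp: in_keys_iff\<close>)

lemma Cp_pairing_in_CHom:
  assumes keys: "Poly_Mapping.keys c \<subseteq> topspace X"
  shows "Cp_pairing X c \<in> CHom_set X"
proof -
  let ?P = "product_topology (\<lambda>_. discrete_topology UNIV) (topspace X) :: ('a \<Rightarrow> int) topology"
  let ?p = "\<lambda>f. \<Sum>x\<in>Poly_Mapping.keys c. poly_mapping.lookup c x * f x"
  have "Cp_pairing X c \<in> hom (Cp_group X) integer_group"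
  proof (rule homI)
    fix f g assume "f \<in> carrier (Cp_group X)" "g \<in> carrier (Cp_group X)"
    then have fg: "f \<in> Cp X" "g \<in> Cp X"
      by (simp_all add: Cp_group_def)
    then have "restrict (\<lambda>x. f x + g x) (topspace X) \<in> Cp X"
      by (rule Cp_binop[where h = "(+)"])
    moreover have "?p (restrict (\<lambda>x. f x + g x) (topspace X)) = ?p (\<lambda>x. f x + g x)"
      using keys by (intro sum.cong) auto
    moreover have "?p (\<lambda>x. f x + g x) = ?p f + ?p g"
      by (simp add: distrib_left sum.distrib)
    ultimately show "Cp_pairing X c (f \<otimes>\<^bsub>Cp_group X\<^esub> g) =
               Cp_pairing X c f \<otimes>\<^bsub>integer_group\<^esub> Cp_pairing X c g"
      using fg by (simp add: Cp_pairing_def Cp_group_def integer_group_def)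
  qed (simp add: integer_group_def)
  moreover have "continuous_map ?P (discrete_topology UNIV) ?p"
  proof (rule continuous_map_discrete_sum[OF finite_keys])
    fix x assume "x \<in> Poly_Mapping.keys c"
    then have "continuous_map ?P (discrete_topology UNIV) (\<lambda>f. f x)"
      using keys by (auto intro: continuous_map_product_projection)
    then show "continuous_map ?P (discrete_topology UNIV) (\<lambda>f. poly_mapping.lookup c x * f x)"
      by (rule continuous_map_discrete_comp)
  qed
  then have "continuous_map (Cp_top X) (discrete_topology UNIV) (Cp_pairing X c)"
    unfolding Cp_top_def
    by (rule continuous_map_eq[OF continuous_map_from_subtopology]) (simp add: Cp_pairing_def)
  ultimately show ?thesis
    by (simp add: CHom_set_def Cp_pairing_def)
qed

lemma Cp_pairing_add:
  assumes "f \<in> Cp X"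
  shows "Cp_pairing X (c + d) f = Cp_pairing X c f + Cp_pairing X d f"
proof -
  let ?K = "Poly_Mapping.keys c \<union> Poly_Mapping.keys d"
  have "Cp_pairing X (c + d) f = (\<Sum>x\<in>?K. poly_mapping.lookup (c + d) x * f x)"
    using assms sum_keys_superset[of ?K "c + d" f] keys_add[of c d] by (simp add: Cp_pairing_apply)
  also have "\<dots> = (\<Sum>x\<in>?K. poly_mapping.lookup c x * f x) + (\<Sum>x\<in>?K. poly_mapping.lookup d x * f x)"
    by (simp add: lookup_add distrib_right sum.distrib)
  also have "\<dots> = Cp_pairing X c f + Cp_pairing X d f"
    using assms sum_keys_superset[of ?K c f] sum_keys_superset[of ?K d f] by (simp add: Cp_pairing_apply)
  finally show ?thesis .
qed

lemma Cp_pairing_coefficient: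
  assumes "finite K" "Poly_Mapping.keys c \<subseteq> K" "x \<in> K"
    and "e \<in> Cp X" "\<And>y. y \<in> K \<Longrightarrow> e y = of_bool (y = x)"
  shows "Cp_pairing X c e = poly_mapping.lookup c x"
proof -
  have "Cp_pairing X c e = (\<Sum>y\<in>K. poly_mapping.lookup c y * e y)"
    using assms(1,2,4) by (simp add: Cp_pairing_apply sum_keys_superset)
  also have "\<dots> = (\<Sum>y\<in>K. poly_mapping.lookup c y * of_bool (y = x))"
    using assms(5) by simp
  also have "\<dots> = poly_mapping.lookup c x"
    using assms(1,3) by simp
  finally show ?thesis .
qed

lemma inj_on_Cp_pairing:
  assumes "t1_space X" "zero_dimensional X"
  shows "inj_on (Cp_pairing X) (carrier (free_Abelian_group (topspace X)))"
proof (rule inj_onI)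
  fix c d
  assume "c \<in> carrier (free_Abelian_group (topspace X))" "d \<in> carrier (free_Abelian_group (topspace X))"
    and eq: "Cp_pairing X c = Cp_pairing X d"
  then have keys: "Poly_Mapping.keys c \<subseteq> topspace X" "Poly_Mapping.keys d \<subseteq> topspace X"
    by (simp_all add: free_Abelian_group_def)
  show "c = d"
  proof (rule poly_mapping_eqI)
    fix x
    show "poly_mapping.lookup c x = poly_mapping.lookup d x"
    proof (cases "x \<in> topspace X")
      case True
      let ?K = "insert x (Poly_Mapping.keys c \<union> Poly_Mapping.keys d)"
      have K: "finite ?K" "?K \<subseteq> topspace X"
        using True keys by auto
      obtain e where e: "e \<in> Cp X" "\<And>y. y \<in> ?K \<Longrightarrow> e y = of_bool (y = x)"
        using Cp_separating_function[OF assms K] by blast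
      have sub: "Poly_Mapping.keys c \<subseteq> ?K" "Poly_Mapping.keys d \<subseteq> ?K" "x \<in> ?K"
        by auto
      have "poly_mapping.lookup c x = Cp_pairing X c e"
        by (rule Cp_pairing_coefficient[OF K(1) sub(1,3) e, symmetric])
      also have "\<dots> = Cp_pairing X d e"
        by (simp add: eq)
      also have "\<dots> = poly_mapping.lookup d x"
        by (rule Cp_pairing_coefficient[OF K(1) sub(2,3) e])
      finally show ?thesis .
    next
      case False
      then have "x \<notin> Poly_Mapping.keys c" "x \<notin> Poly_Mapping.keys d"
        using keys by auto
      then show ?thesis
        by (simp add: in_keys_iff)
    qed
  qed
qed

lemma CHom_in_image_Cp_pairing:
  assumes "t1_space X" "zero_dimensional X" "\<phi> \<in> CHom_set X"
  shows "\<phi> \<in> Cp_pairing X ` carrier (free_Abelian_group (topspace X))"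
proof -
  obtain F n where F: "finite F" "F \<subseteq> topspace X"
    and n: "\<And>f. f \<in> Cp X \<Longrightarrow> \<phi> f = (\<Sum>x\<in>F. n x * f x)"
    using CHom_eq_finite_sum[OF assms] by blast
  define c where "c = Abs_poly_mapping (\<lambda>x. if x \<in> F then n x else 0)"
  have "finite {x. (if x \<in> F then n x else 0) \<noteq> 0}"
    using F(1) by (rule finite_subset[rotated]) auto
  then have lookup_c: "poly_mapping.lookup c = (\<lambda>x. if x \<in> F then n x else 0)"
    by (simp add: c_def)
  have keys_c: "Poly_Mapping.keys c \<subseteq> F"
    by (auto simp: in_keys_iff lookup_c split: if_splits)
  have "Cp_pairing X c = \<phi>"
  proof (rule extensionalityI)
    show "Cp_pairing X c \<in> extensional (Cp X)"
      by (simp add: Cp_pairing_def)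
    show "\<phi> \<in> extensional (Cp X)"
      using assms(3) by (simp add: CHom_set_def)
    fix f assume "f \<in> Cp X"
    then show "Cp_pairing X c f = \<phi> f"
      using sum_keys_superset[OF F(1) keys_c, of f] by (simp add: Cp_pairing_apply n lookup_c)
  qed
  moreover have "c \<in> carrier (free_Abelian_group (topspace X))"
    using keys_c F(2) by (simp add: free_Abelian_group_def)
  ultimately show ?thesis
    by blast
qed

lemma Cp_pairing_iso:
  assumes "t1_space X" "zero_dimensional X"
  shows "Cp_pairing X \<in> iso (free_Abelian_group (topspace X)) (CHom X)"
proof -
  have hom: "Cp_pairing X \<in> hom (free_Abelian_group (topspace X)) (CHom X)"
  proof (rule homI)
    fix c assume "c \<in> carrier (free_Abelian_group (topspace X))"
    then show "Cp_pairing X c \<in> carrier (CHom X)"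
      by (simp add: free_Abelian_group_def CHom_def Cp_pairing_in_CHom)
  next
    fix c d
    show "Cp_pairing X (c \<otimes>\<^bsub>free_Abelian_group (topspace X)\<^esub> d) =
          Cp_pairing X c \<otimes>\<^bsub>CHom X\<^esub> Cp_pairing X d"
    proof (rule extensionalityI[where A = "Cp X"])
      fix f assume "f \<in> Cp X"
      then show "Cp_pairing X (c \<otimes>\<^bsub>free_Abelian_group (topspace X)\<^esub> d) f =
                 (Cp_pairing X c \<otimes>\<^bsub>CHom X\<^esub> Cp_pairing X d) f"
        by (simp add: free_Abelian_group_def CHom_def Cp_pairing_add)
    qed (simp_all add: Cp_pairing_def CHom_def)
  qed
  moreover have "Cp_pairing X ` carrier (free_Abelian_group (topspace X)) = carrier (CHom X)"
    using hom_carrier[OF hom] CHom_in_image_Cp_pairing[OF assms]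
    by (auto simp: CHom_def)
  ultimately show ?thesis
    by (simp add: iso_def bij_betw_def inj_on_Cp_pairing[OF assms])
qed

theorem lemma5p2:
  fixes X :: "'a topology"
  assumes "tikhonov_space X" and "zero_dimensional X"
  shows "(\<forall>\<phi> \<in> carrier (CHom X). \<exists>F n. finite F \<and> F \<subseteq> topspace X \<and>
            (\<forall>f \<in> Cp X. \<phi> f = (\<Sum>x\<in>F. n x * f x)))
       \<and> (\<exists>\<Psi>. \<Psi> \<in> iso (CHom X) (free_Abelian_group (topspace X)) \<and>
            (\<forall>\<phi> \<in> carrier (CHom X). \<forall>f \<in> Cp X.
               \<phi> f = (\<Sum>x\<in>Poly_Mapping.keys (\<Psi> \<phi>). poly_mapping.lookup (\<Psi> \<phi>) x * f x)))"
proof -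
  let ?A = "free_Abelian_group (topspace X)"
  have iso: "Cp_pairing X \<in> iso ?A (CHom X)"
    using assms by (simp add: tikhonov_space_def Cp_pairing_iso)
  define \<Psi> where "\<Psi> = inv_into (carrier ?A) (Cp_pairing X)"
  have \<Psi>_iso: "\<Psi> \<in> iso (CHom X) ?A"
    unfolding \<Psi>_def by (rule group.iso_set_sym[OF group_free_Abelian_group iso])
  have \<Psi>: "\<Psi> \<phi> \<in> carrier ?A" "Cp_pairing X (\<Psi> \<phi>) = \<phi>" if "\<phi> \<in> carrier (CHom X)" for \<phi>
  proof -
    have "\<phi> \<in> Cp_pairing X ` carrier ?A"
      using iso that by (simp add: iso_def bij_betw_def)
    then show "\<Psi> \<phi> \<in> carrier ?A" "Cp_pairing X (\<Psi> \<phi>) = \<phi>"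
      unfolding \<Psi>_def by (rule inv_into_into, rule f_inv_into_f)
  qed
  have keys: "Poly_Mapping.keys (\<Psi> \<phi>) \<subseteq> topspace X" if "\<phi> \<in> carrier (CHom X)" for \<phi>
    using \<Psi>(1)[OF that] by (simp add: free_Abelian_group_def)
  have rep: "\<phi> f = (\<Sum>x\<in>Poly_Mapping.keys (\<Psi> \<phi>). poly_mapping.lookup (\<Psi> \<phi>) x * f x)"
    if "\<phi> \<in> carrier (CHom X)" "f \<in> Cp X" for \<phi> f
    using Cp_pairing_apply[OF that(2), of "\<Psi> \<phi>"] \<Psi>(2)[OF that(1)] by simp
  have "\<exists>F n. finite F \<and> F \<subseteq> topspace X \<and> (\<forall>f \<in> Cp X. \<phi> f = (\<Sum>x\<in>F. n x * f x))"
    if "\<phi> \<in> carrier (CHom X)" for \<phi>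
    using keys[OF that] rep[OF that] finite_keys by blast
  then show ?thesis
    using \<Psi>_iso rep by blast
qed

end
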